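(* Let $p\ge 4$ be an integer and let $(a_n)_{n\ge0}$ be the sequence defined by $a_0=0$, $a_1=1$, $a_2=p-1$ and $a_{n+3}=(p-1)a_{n+2}-(p-1)a_{n+1}+a_n$ for $n\ge 0$. Set $\beta_n=2(a_n+a_{n-1})-1$. Then for every $n\ge 1$, \[ \frac{(a_n+a_{n-1})^2}{p}-\frac{a_n+a_{n-1}}{p}=a_na_{n-1} \qquad\text{and}\qquad \beta_n^2=4p\,a_na_{n-1}+1. \] *)

theory Defs
  imports Complex_Main
begin

fun aseq :: "int \<Rightarrow> nat \<Rightarrow> int" where
  "aseq p 0 = 0"
| "aseq p (Suc 0) = 1"
| "aseq p (Suc (Suc 0)) = p - 1"
| "aseq p (Suc (Suc (Suc n))) =
     (p - 1) * aseq p (Suc (Suc n)) - (p - 1) * aseq p (Suc n) + aseq p n"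

definition beta :: "int \<Rightarrow> nat \<Rightarrow> int" where
  "beta p n = 2 * (aseq p n + aseq p (n - 1)) - 1"

end

theory Submission
  imports Defs
begin

(* The third-order recurrence has the first integral a(n+2) + a(n) - (p-2) a(n+1) = 1,
   so consecutive terms are related by a Vieta jump that preserves the quadratic form
   Q(x, y) = x^2 + y^2 - (p-2) x y - x - y, which vanishes at (a(1), a(0)) = (1, 0).
   The relation Q(a(n), a(n-1)) = 0 is the identity
   (a(n) + a(n-1))^2 - (a(n) + a(n-1)) = p a(n) a(n-1), and both claims are rewritings of it. *)

lemma aseq_Suc_Suc:
  "aseq p (Suc (Suc n)) = (p - 2) * aseq p (Suc n) + 1 - aseq p n"
  by (induction n) (simp_all add: algebra_simps)

definition vieta_form :: "int \<Rightarrow> int \<Rightarrow> int \<Rightarrow> int" where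
  "vieta_form c x y = x\<^sup>2 + y\<^sup>2 - c * x * y - x - y"

lemma vieta_form_jump: "vieta_form c (c * y + 1 - x) y = vieta_form c y x"
  unfolding vieta_form_def by (simp add: power2_eq_square algebra_simps)

lemma vieta_form_aseq: "vieta_form (p - 2) (aseq p (Suc n)) (aseq p n) = 0"
proof (induction n)
  case 0
  show ?case by (simp add: vieta_form_def)
next
  case (Suc n)
  then show ?case by (simp only: aseq_Suc_Suc vieta_form_jump)
qed

lemma aseq_sum_square:
  "(aseq p (Suc n) + aseq p n)\<^sup>2 - (aseq p (Suc n) + aseq p n) = p * (aseq p (Suc n) * aseq p n)"
  using vieta_form_aseq[of p n] unfolding vieta_form_def
  by (simp add: power2_eq_square algebra_simps)

theorem lemma3p13:
  fixes p :: int and n :: nat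
  assumes "p \<ge> 4" and "n \<ge> 1"
  shows "(of_int (aseq p n + aseq p (n - 1)))\<^sup>2 / of_int p
           - of_int (aseq p n + aseq p (n - 1)) / of_int p
         = (of_int (aseq p n * aseq p (n - 1)) :: real)
       \<and> (beta p n)\<^sup>2 = 4 * p * aseq p n * aseq p (n - 1) + 1"
proof
  obtain m where n: "n = Suc m" using assms(2) by (cases n) auto
  have key: "(aseq p n + aseq p (n - 1))\<^sup>2 - (aseq p n + aseq p (n - 1))
      = p * (aseq p n * aseq p (n - 1))"
    unfolding n using aseq_sum_square by simp
  then have "(of_int (aseq p n + aseq p (n - 1)))\<^sup>2 - of_int (aseq p n + aseq p (n - 1))
      = (of_int p * of_int (aseq p n * aseq p (n - 1)) :: real)"
    by (metis of_int_diff of_int_mult of_int_power)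
  moreover have "(of_int p :: real) \<noteq> 0" using assms(1) by simp
  ultimately show "(of_int (aseq p n + aseq p (n - 1)))\<^sup>2 / of_int p
           - of_int (aseq p n + aseq p (n - 1)) / of_int p
         = (of_int (aseq p n * aseq p (n - 1)) :: real)"
    by (simp add: diff_divide_distrib[symmetric])
  show "(beta p n)\<^sup>2 = 4 * p * aseq p n * aseq p (n - 1) + 1"
    using key unfolding beta_def by (simp add: power2_eq_square algebra_simps)
qed

end
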